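(* Let $\beta>1/2$, $m>0$, and let $X$ be a random variable with density $h_{\beta,m}(x)=C_{\beta,m}x^{-2\beta}e^{-m/x}$, $x\in(0,\infty)$, with median $\bar x_{\beta,m}$. Then for every $1\le p<\infty$ and every smooth $\phi:(0,\infty)\to\mathbb R$ with $E[|\phi(X)|^p]<\infty$, $$E\big[|\phi(X)-E(\phi(X))|^p\big]\le \big(p\,D(\beta,m)\big)^p\,E\big[X^p|\phi'(X)|^p\big],\qquad D(\beta,m)=\frac{1}{\bar x_{\beta,m}\,h_{\beta,m}(\bar x_{\beta,m})}.$$
   Context: $C_{\beta,m}>0$ is the normalizing constant making $h_{\beta,m}$ a probability density on $(0,\infty)$. The median $\bar x_{\beta,m}$ is the point where $\int_0^{\bar x_{\beta,m}}h_{\beta,m}(x)\,dx=1/2$. *)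

theory Defs
  imports "HOL-Analysis.Analysis"
begin

definition C_const :: "real \<Rightarrow> real \<Rightarrow> real" where
  "C_const \<beta> m = 1 / (LINT x:{0<..}|lborel. x powr (-2 * \<beta>) * exp (- m / x))"

definition h_dens :: "real \<Rightarrow> real \<Rightarrow> real \<Rightarrow> real" where
  "h_dens \<beta> m x = (if 0 < x then C_const \<beta> m * x powr (-2 * \<beta>) * exp (- m / x) else 0)"

definition smooth_on :: "real set \<Rightarrow> (real \<Rightarrow> real) \<Rightarrow> bool" where
  "smooth_on S f \<longleftrightarrow> (\<forall>n. \<forall>x\<in>S. ((deriv ^^ n) f) differentiable (at x))"

end

theory Submission
  imports Defs
begin

(* Write h for the density, c = 1 / (2 * xbar * h xbar), and phi' for the derivative of phi.
   The density satisfies the hazard bounds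
     P(X <= x) <= c * x * h x  for x <= xbar,      P(X >= x) <= c * x * h x  for x >= xbar.
   Substituting t = (x / xbar) * s reduces them to h ((x / xbar) * s) * h xbar <= h x * h s
   (the powers of the variable cancel and only the factor exp (-m/x) matters) together with
   P(X <= xbar) = P(X >= xbar) = 1/2.
   On each side of the median a hazard bound yields the weighted Hardy inequality
     E |phi X - phi xbar|^p <= (p * c)^p * E (X^p * |phi' X|^p):
   with U the variation of phi measured from xbar and Q the mass beyond x, integrate
   (U + eps)^p * Q by parts and absorb the cross term by Young's inequality.
   Replacing phi xbar by the mean costs the factor 2^p, by convexity of t^p and Jensen's inequality. *)

section \<open>A weighted Hardy inequality on an interval\<close>

lemma powr_Youngs_inequality:
  fixes a b p :: real
  assumes "a > 0" "b \<ge> 0" "p \<ge> 1"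
  shows "a powr (p - 1) * b \<le> (1 - 1/p) * a powr p + (1/p) * b powr p"
proof (cases "b = 0")
  case True
  then show ?thesis using assms by (simp add: field_simps)
next
  case False
  have "(a powr p) powr (1 - 1/p) * (b powr p) powr (1/p) \<le> (1 - 1/p) * a powr p + (1/p) * b powr p"
    using assms False by (intro Youngs_inequality_0) (auto simp: field_simps)
  moreover have "p * (1 - 1/p) = p - 1"
    using assms by (simp add: field_simps)
  ultimately show ?thesis
    using assms by (simp add: powr_powr)
qed

lemma Hardy_integration_by_parts:
  fixes U u Q h :: "real \<Rightarrow> real" and a b p s \<epsilon> :: real
  assumes "a \<le> b" and "s = 1 \<or> s = -1" and "\<epsilon> > 0"
    and cont: "continuous_on {a..b} U" "continuous_on {a..b} u"
      "continuous_on {a..b} Q" "continuous_on {a..b} h"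
    and U: "\<And>x. x \<in> {a<..<b} \<Longrightarrow> (U has_real_derivative s * u x) (at x)"
    and Q: "\<And>x. x \<in> {a<..<b} \<Longrightarrow> (Q has_real_derivative - s * h x) (at x)"
    and U_nonneg: "\<And>x. x \<in> {a..b} \<Longrightarrow> 0 \<le> U x"
    and boundary: "U a = 0 \<or> Q a = 0" "U b = 0 \<or> Q b = 0"
  shows "integral {a..b} (\<lambda>x. p * (U x + \<epsilon>) powr (p - 1) * u x * Q x)
       = integral {a..b} (\<lambda>x. ((U x + \<epsilon>) powr p - \<epsilon> powr p) * h x)"
    (is "integral _ ?J1 = integral _ ?J2")
proof -
  define \<Phi> where "\<Phi> x = (U x + \<epsilon>) powr p - \<epsilon> powr p" for x
  have pos: "x \<in> {a..b} \<Longrightarrow> U x + \<epsilon> > 0" for x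
    using U_nonneg[of x] \<open>\<epsilon> > 0\<close> by auto
  have c\<Phi>: "continuous_on {a..b} \<Phi>"
    unfolding \<Phi>_def using pos by (intro continuous_intros cont) (fastforce simp: less_le)+
  have cJ1: "continuous_on {a..b} ?J1"
    using pos by (intro continuous_intros cont) (fastforce simp: less_le)+
  have cJ2: "continuous_on {a..b} ?J2"
    using continuous_on_mult[OF c\<Phi> cont(4)] by (simp add: \<Phi>_def)
  have "((\<lambda>x. s * (?J1 x - ?J2 x)) has_integral (\<Phi> b * Q b - \<Phi> a * Q a)) {a..b}"
  proof (rule fundamental_theorem_of_calculus_interior)
    show "continuous_on {a..b} (\<lambda>x. \<Phi> x * Q x)"
      by (intro continuous_on_mult c\<Phi> cont)
    fix x assume x: "x \<in> {a<..<b}"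
    have px: "U x + \<epsilon> > 0" using x pos by auto
    have "((\<lambda>x. \<Phi> x * Q x) has_real_derivative
        (p * (U x + \<epsilon>) powr (p - 1) * (s * u x)) * Q x + \<Phi> x * (- s * h x)) (at x)"
      unfolding \<Phi>_def by (rule derivative_eq_intros U[OF x] Q[OF x] refl | use px in simp)+
    moreover have "(p * (U x + \<epsilon>) powr (p - 1) * (s * u x)) * Q x + \<Phi> x * (- s * h x)
        = s * (?J1 x - ?J2 x)"
      by (simp add: \<Phi>_def algebra_simps)
    ultimately show "((\<lambda>x. \<Phi> x * Q x) has_vector_derivative s * (?J1 x - ?J2 x)) (at x)"
      by (simp add: has_real_derivative_iff_has_vector_derivative)
  qed fact
  moreover have "\<Phi> b * Q b = 0" "\<Phi> a * Q a = 0"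
    using boundary unfolding \<Phi>_def by auto
  ultimately have "((\<lambda>x. s * (s * (?J1 x - ?J2 x))) has_integral s * 0) {a..b}"
    by (intro has_integral_mult_right) simp
  moreover have "s * s = 1" using \<open>s = 1 \<or> s = -1\<close> by auto
  ultimately have "((\<lambda>x. ?J1 x - ?J2 x) has_integral 0) {a..b}"
    by (simp add: mult.assoc[symmetric])
  then have "integral {a..b} (\<lambda>x. ?J1 x - ?J2 x) = 0"
    by (rule integral_unique)
  then show ?thesis
    using integrable_continuous_interval[OF cJ1] integrable_continuous_interval[OF cJ2]
    by (simp add: integral_diff)
qed

lemma powr_Young_Hardy_pointwise:
  fixes y u q w x c p :: real
  assumes "0 < y" "0 \<le> u" "0 \<le> q" "q \<le> c * x * w" "0 \<le> w" "0 \<le> x" "0 \<le> c" "1 \<le> p"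
  shows "p * y powr (p - 1) * u * q
       \<le> (1 - 1/p) * (y powr p * w) + (1/p) * (p * c) powr p * (x powr p * u powr p * w)"
proof -
  have "p * y powr (p - 1) * u * q \<le> p * y powr (p - 1) * u * (c * x * w)"
    using assms by (intro mult_left_mono) auto
  also have "\<dots> = (y powr (p - 1) * (p * c * x * u)) * w"
    by (simp add: algebra_simps)
  also have "\<dots> \<le> ((1 - 1/p) * y powr p + (1/p) * (p * c * x * u) powr p) * w"
    using assms by (intro mult_right_mono powr_Youngs_inequality) auto
  also have "(p * c * x * u) powr p = (p * c) powr p * (x powr p * u powr p)"
    using assms by (simp add: powr_mult)
  finally show ?thesis by (simp add: algebra_simps)
qed

(* The shift by eps keeps the base of powr positive, so that the chain rule applies where U vanishes. *)
lemma weighted_Hardy_interval_regularized: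
  fixes U u Q h :: "real \<Rightarrow> real" and a b c p s \<epsilon> :: real
  assumes "0 \<le> a" "a \<le> b" "1 \<le> p" "0 \<le> c" "s = 1 \<or> s = -1" "\<epsilon> > 0"
    and cont: "continuous_on {a..b} U" "continuous_on {a..b} u"
      "continuous_on {a..b} Q" "continuous_on {a..b} h"
    and U: "\<And>x. x \<in> {a<..<b} \<Longrightarrow> (U has_real_derivative s * u x) (at x)"
    and Q: "\<And>x. x \<in> {a<..<b} \<Longrightarrow> (Q has_real_derivative - s * h x) (at x)"
    and nonneg: "\<And>x. x \<in> {a..b} \<Longrightarrow> 0 \<le> U x \<and> 0 \<le> u x \<and> 0 \<le> Q x \<and> 0 \<le> h x"
    and Q_le: "\<And>x. x \<in> {a..b} \<Longrightarrow> Q x \<le> c * x * h x"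
    and boundary: "U a = 0 \<or> Q a = 0" "U b = 0 \<or> Q b = 0"
  shows "integral {a..b} (\<lambda>x. (U x + \<epsilon>) powr p * h x)
       \<le> p * \<epsilon> powr p * integral {a..b} h
         + (p * c) powr p * integral {a..b} (\<lambda>x. x powr p * u x powr p * h x)"
proof -
  define K where "K = (p * c) powr p"
  define I1 where "I1 = integral {a..b} (\<lambda>x. (U x + \<epsilon>) powr p * h x)"
  define I3 where "I3 = integral {a..b} (\<lambda>x. x powr p * u x powr p * h x)"
  have pos: "x \<in> {a..b} \<Longrightarrow> U x + \<epsilon> > 0" for x
    using nonneg[of x] \<open>\<epsilon> > 0\<close> by auto
  have cI1: "continuous_on {a..b} (\<lambda>x. (U x + \<epsilon>) powr p * h x)"
    using pos by (intro continuous_intros cont) (fastforce simp: less_le)+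
  have cI3: "continuous_on {a..b} (\<lambda>x. x powr p * u x powr p * h x)"
    using nonneg assms(1-3) by (intro continuous_intros cont continuous_on_powr') auto
  have cJ1: "continuous_on {a..b} (\<lambda>x. p * (U x + \<epsilon>) powr (p - 1) * u x * Q x)"
    using pos by (intro continuous_intros cont) (fastforce simp: less_le)+
  note int = integrable_continuous_interval
  have "integral {a..b} (\<lambda>x. p * (U x + \<epsilon>) powr (p - 1) * u x * Q x)
      = integral {a..b} (\<lambda>x. (U x + \<epsilon>) powr p * h x - \<epsilon> powr p * h x)"
    using Hardy_integration_by_parts[OF \<open>a \<le> b\<close> \<open>s = 1 \<or> s = -1\<close> \<open>\<epsilon> > 0\<close> cont U Q _ boundary]
      nonneg by (simp add: algebra_simps)
  also have "\<dots> = I1 - \<epsilon> powr p * integral {a..b} h"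
    unfolding I1_def using int[OF cI1] integrable_cmul[OF int[OF cont(4)], of "\<epsilon> powr p"]
    by (simp add: integral_diff)
  finally have parts: "integral {a..b} (\<lambda>x. p * (U x + \<epsilon>) powr (p - 1) * u x * Q x)
      = I1 - \<epsilon> powr p * integral {a..b} h" .
  have Young: "p * (U x + \<epsilon>) powr (p - 1) * u x * Q x
      \<le> (1 - 1/p) * ((U x + \<epsilon>) powr p * h x) + (1/p) * K * (x powr p * u x powr p * h x)"
    if "x \<in> {a..b}" for x
    unfolding K_def using that nonneg[OF that] Q_le[OF that] pos[OF that] assms(1,3,4)
    by (intro powr_Young_Hardy_pointwise) auto
  have i1: "(\<lambda>x. (1 - 1/p) * ((U x + \<epsilon>) powr p * h x)) integrable_on {a..b}"
    by (rule integrable_on_mult_right[OF int[OF cI1]])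
  have i3: "(\<lambda>x. (1/p) * K * (x powr p * u x powr p * h x)) integrable_on {a..b}"
    by (rule integrable_on_mult_right[OF int[OF cI3]])
  have "I1 - \<epsilon> powr p * integral {a..b} h \<le> integral {a..b} (\<lambda>x.
      (1 - 1/p) * ((U x + \<epsilon>) powr p * h x) + (1/p) * K * (x powr p * u x powr p * h x))"
    unfolding parts[symmetric] using Young int[OF cJ1] i1 i3
    by (intro integral_le integrable_add) auto
  also have "\<dots> = (1 - 1/p) * I1 + (1/p) * K * I3"
    unfolding I1_def I3_def integral_add[OF i1 i3] by simp
  finally have "I1 / p \<le> \<epsilon> powr p * integral {a..b} h + K * I3 / p"
    by (simp add: algebra_simps)
  then show ?thesis
    unfolding I1_def I3_def K_def using assms(3) by (simp add: field_simps)
qed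

lemma weighted_Hardy_interval:
  fixes U u Q h :: "real \<Rightarrow> real" and a b c p s :: real
  assumes "0 \<le> a" "a \<le> b" "1 \<le> p" "0 \<le> c" "s = 1 \<or> s = -1"
    and cont: "continuous_on {a..b} U" "continuous_on {a..b} u"
      "continuous_on {a..b} Q" "continuous_on {a..b} h"
    and U: "\<And>x. x \<in> {a<..<b} \<Longrightarrow> (U has_real_derivative s * u x) (at x)"
    and Q: "\<And>x. x \<in> {a<..<b} \<Longrightarrow> (Q has_real_derivative - s * h x) (at x)"
    and nonneg: "\<And>x. x \<in> {a..b} \<Longrightarrow> 0 \<le> U x \<and> 0 \<le> u x \<and> 0 \<le> Q x \<and> 0 \<le> h x"
    and Q_le: "\<And>x. x \<in> {a..b} \<Longrightarrow> Q x \<le> c * x * h x"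
    and boundary: "U a = 0 \<or> Q a = 0" "U b = 0 \<or> Q b = 0"
  shows "integral {a..b} (\<lambda>x. U x powr p * h x)
       \<le> (p * c) powr p * integral {a..b} (\<lambda>x. x powr p * u x powr p * h x)"
proof (rule field_le_epsilon)
  fix \<delta> :: real assume "\<delta> > 0"
  define H where "H = integral {a..b} h"
  have "H \<ge> 0"
    unfolding H_def using nonneg integrable_continuous_interval[OF cont(4)]
    by (intro integral_nonneg) auto
  then have pH: "p * H + 1 > 0" using assms(3) by (simp add: add_nonneg_pos)
  define \<epsilon> where "\<epsilon> = (\<delta> / (p * H + 1)) powr (1/p)"
  have "\<epsilon> > 0" unfolding \<epsilon>_def using \<open>\<delta> > 0\<close> pH by simp
  have "\<epsilon> powr p = \<delta> / (p * H + 1)"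
    unfolding \<epsilon>_def using \<open>\<delta> > 0\<close> pH assms(3) by (simp add: powr_powr)
  then have "\<epsilon> powr p * (p * H + 1) = \<delta>"
    using pH by simp
  then have "p * \<epsilon> powr p * H \<le> \<delta>"
    by (simp add: algebra_simps) (metis le_add_same_cancel2 powr_ge_zero)
  moreover have "integral {a..b} (\<lambda>x. U x powr p * h x) \<le> integral {a..b} (\<lambda>x. (U x + \<epsilon>) powr p * h x)"
  proof (rule integral_le)
    show "(\<lambda>x. U x powr p * h x) integrable_on {a..b}"
      using nonneg assms(3) by (intro integrable_continuous_interval continuous_intros cont continuous_on_powr') auto
    show "(\<lambda>x. (U x + \<epsilon>) powr p * h x) integrable_on {a..b}"
      using nonneg assms(3) \<open>\<epsilon> > 0\<close>
      by (intro integrable_continuous_interval continuous_intros cont continuous_on_powr') auto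
  qed (use nonneg assms(3) \<open>\<epsilon> > 0\<close> in \<open>auto intro!: mult_right_mono powr_mono2\<close>)
  ultimately show "integral {a..b} (\<lambda>x. U x powr p * h x)
      \<le> (p * c) powr p * integral {a..b} (\<lambda>x. x powr p * u x powr p * h x) + \<delta>"
    using weighted_Hardy_interval_regularized[OF assms(1-5) \<open>\<epsilon> > 0\<close> cont U Q nonneg Q_le boundary]
    unfolding H_def by linarith
qed

lemma abs_diff_le_integral_abs_deriv:
  fixes \<phi> \<phi>' :: "real \<Rightarrow> real"
  assumes "a \<le> b" and \<phi>: "\<And>t. t \<in> {a..b} \<Longrightarrow> (\<phi> has_real_derivative \<phi>' t) (at t)"
    and "continuous_on {a..b} \<phi>'"
  shows "\<bar>\<phi> b - \<phi> a\<bar> \<le> integral {a..b} (\<lambda>t. \<bar>\<phi>' t\<bar>)"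
proof -
  have "(\<phi>' has_integral (\<phi> b - \<phi> a)) {a..b}"
    using \<open>a \<le> b\<close> \<phi> by (intro fundamental_theorem_of_calculus)
      (auto simp: has_real_derivative_iff_has_vector_derivative[symmetric] intro: has_field_derivative_at_within)
  moreover have "(\<lambda>t. \<bar>\<phi>' t\<bar>) integrable_on {a..b}"
    by (intro integrable_continuous_interval continuous_intros assms(3))
  ultimately show ?thesis
    using integral_norm_bound_integral[of \<phi>' "{a..b}" "\<lambda>t. \<bar>\<phi>' t\<bar>"]
    by (auto simp: has_integral_integrable integral_unique)
qed

lemma integral_powr_deviation_le:
  fixes \<phi> U h :: "real \<Rightarrow> real" and y p :: real
  assumes "1 \<le> p"
    and cont: "continuous_on {a..b} \<phi>" "continuous_on {a..b} U" "continuous_on {a..b} h"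
    and "\<And>x. x \<in> {a..b} \<Longrightarrow> \<bar>\<phi> x - y\<bar> \<le> U x" and "\<And>x. x \<in> {a..b} \<Longrightarrow> 0 \<le> h x"
  shows "integral {a..b} (\<lambda>x. \<bar>\<phi> x - y\<bar> powr p * h x) \<le> integral {a..b} (\<lambda>x. U x powr p * h x)"
proof (rule integral_le)
  have "x \<in> {a..b} \<Longrightarrow> 0 \<le> U x" for x
    using assms(5)[of x] by linarith
  then show "(\<lambda>x. U x powr p * h x) integrable_on {a..b}"
    using \<open>1 \<le> p\<close> by (intro integrable_continuous_interval continuous_intros cont continuous_on_powr') auto
qed (use assms in \<open>auto intro!: integrable_continuous_interval continuous_intros continuous_on_powr'
      mult_right_mono powr_mono2\<close>)

lemma Hardy_deviation_from_left_endpoint: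
  fixes \<phi> \<phi>' h :: "real \<Rightarrow> real" and a b c p :: real
  assumes "0 \<le> a" "a \<le> b" "1 \<le> p" "0 \<le> c"
    and \<phi>: "\<And>x. x \<in> {a..b} \<Longrightarrow> (\<phi> has_real_derivative \<phi>' x) (at x)"
    and "continuous_on {a..b} \<phi>'" "continuous_on {a..b} h"
    and h_nonneg: "\<And>x. x \<in> {a..b} \<Longrightarrow> 0 \<le> h x"
    and tail: "\<And>x. x \<in> {a..b} \<Longrightarrow> integral {x..b} h \<le> c * x * h x"
  shows "integral {a..b} (\<lambda>x. \<bar>\<phi> x - \<phi> a\<bar> powr p * h x)
       \<le> (p * c) powr p * integral {a..b} (\<lambda>x. x powr p * \<bar>\<phi>' x\<bar> powr p * h x)"
proof -
  define U where "U x = integral {a..x} (\<lambda>t. \<bar>\<phi>' t\<bar>)" for x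
  define Q where "Q x = integral {x..b} h" for x
  have c\<phi>': "continuous_on {a..b} (\<lambda>x. \<bar>\<phi>' x\<bar>)"
    by (intro continuous_intros assms(6))
  have dU: "(U has_real_derivative \<bar>\<phi>' x\<bar>) (at x within {a..b})" if "x \<in> {a..b}" for x
    unfolding U_def by (rule integral_has_real_derivative[OF c\<phi>' that])
  have dQ: "(Q has_real_derivative - h x) (at x within {a..b})" if "x \<in> {a..b}" for x
    unfolding Q_def by (rule integral_has_real_derivative'[OF assms(7) that])
  have cU: "continuous_on {a..b} U" using dU by (rule DERIV_continuous_on)
  have cQ: "continuous_on {a..b} Q" using dQ by (rule DERIV_continuous_on)
  have deviation: "\<bar>\<phi> x - \<phi> a\<bar> \<le> U x" if "x \<in> {a..b}" for x
    unfolding U_def using that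
    by (intro abs_diff_le_integral_abs_deriv \<phi> continuous_on_subset[OF assms(6)]) auto
  have "integral {a..b} (\<lambda>x. U x powr p * h x)
      \<le> (p * c) powr p * integral {a..b} (\<lambda>x. x powr p * \<bar>\<phi>' x\<bar> powr p * h x)"
  proof (rule weighted_Hardy_interval[where s = 1 and Q = Q])
    show "continuous_on {a..b} U" "continuous_on {a..b} Q" by (fact cU cQ)+
    show "(U has_real_derivative 1 * \<bar>\<phi>' x\<bar>) (at x)" "(Q has_real_derivative - 1 * h x) (at x)"
      if "x \<in> {a<..<b}" for x
      using dU[of x] dQ[of x] that at_within_Icc_at[of a x b] by simp_all
    show "0 \<le> U x \<and> 0 \<le> \<bar>\<phi>' x\<bar> \<and> 0 \<le> Q x \<and> 0 \<le> h x" if "x \<in> {a..b}" for x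
      using that deviation[of x] h_nonneg unfolding Q_def
      by (auto intro!: integral_nonneg integrable_continuous_interval continuous_on_subset[OF assms(7)])
    show "Q x \<le> c * x * h x" if "x \<in> {a..b}" for x
      unfolding Q_def using tail[OF that] .
  qed (use assms(1-4,7) c\<phi>' in \<open>auto simp: U_def Q_def\<close>)
  moreover have "continuous_on {a..b} \<phi>"
    by (rule DERIV_continuous_on[where D = \<phi>']) (use \<phi> in \<open>auto intro: has_field_derivative_at_within\<close>)
  ultimately show ?thesis
    using integral_powr_deviation_le[OF assms(3) _ cU assms(7) deviation h_nonneg] by linarith
qed

lemma Hardy_deviation_from_right_endpoint:
  fixes \<phi> \<phi>' h :: "real \<Rightarrow> real" and a b c p :: real
  assumes "0 \<le> a" "a \<le> b" "1 \<le> p" "0 \<le> c"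
    and \<phi>: "\<And>x. x \<in> {a..b} \<Longrightarrow> (\<phi> has_real_derivative \<phi>' x) (at x)"
    and "continuous_on {a..b} \<phi>'" "continuous_on {a..b} h"
    and h_nonneg: "\<And>x. x \<in> {a..b} \<Longrightarrow> 0 \<le> h x"
    and head: "\<And>x. x \<in> {a..b} \<Longrightarrow> integral {a..x} h \<le> c * x * h x"
  shows "integral {a..b} (\<lambda>x. \<bar>\<phi> x - \<phi> b\<bar> powr p * h x)
       \<le> (p * c) powr p * integral {a..b} (\<lambda>x. x powr p * \<bar>\<phi>' x\<bar> powr p * h x)"
proof -
  define U where "U x = integral {x..b} (\<lambda>t. \<bar>\<phi>' t\<bar>)" for x
  define Q where "Q x = integral {a..x} h" for x
  have c\<phi>': "continuous_on {a..b} (\<lambda>x. \<bar>\<phi>' x\<bar>)"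
    by (intro continuous_intros assms(6))
  have dU: "(U has_real_derivative - \<bar>\<phi>' x\<bar>) (at x within {a..b})" if "x \<in> {a..b}" for x
    unfolding U_def by (rule integral_has_real_derivative'[OF c\<phi>' that])
  have dQ: "(Q has_real_derivative h x) (at x within {a..b})" if "x \<in> {a..b}" for x
    unfolding Q_def by (rule integral_has_real_derivative[OF assms(7) that])
  have cU: "continuous_on {a..b} U" using dU by (rule DERIV_continuous_on)
  have cQ: "continuous_on {a..b} Q" using dQ by (rule DERIV_continuous_on)
  have deviation: "\<bar>\<phi> x - \<phi> b\<bar> \<le> U x" if "x \<in> {a..b}" for x
    using abs_diff_le_integral_abs_deriv[of x b \<phi> \<phi>'] that \<phi> continuous_on_subset[OF assms(6)]
    unfolding U_def by (auto simp: abs_minus_commute)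
  have "integral {a..b} (\<lambda>x. U x powr p * h x)
      \<le> (p * c) powr p * integral {a..b} (\<lambda>x. x powr p * \<bar>\<phi>' x\<bar> powr p * h x)"
  proof (rule weighted_Hardy_interval[where s = "-1" and Q = Q])
    show "continuous_on {a..b} U" "continuous_on {a..b} Q" by (fact cU cQ)+
    show "(U has_real_derivative -1 * \<bar>\<phi>' x\<bar>) (at x)" "(Q has_real_derivative - (-1) * h x) (at x)"
      if "x \<in> {a<..<b}" for x
      using dU[of x] dQ[of x] that at_within_Icc_at[of a x b] by simp_all
    show "0 \<le> U x \<and> 0 \<le> \<bar>\<phi>' x\<bar> \<and> 0 \<le> Q x \<and> 0 \<le> h x" if "x \<in> {a..b}" for x
      using that deviation[of x] h_nonneg unfolding Q_def
      by (auto intro!: integral_nonneg integrable_continuous_interval continuous_on_subset[OF assms(7)])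
    show "Q x \<le> c * x * h x" if "x \<in> {a..b}" for x
      unfolding Q_def using head[OF that] .
  qed (use assms(1-4,7) c\<phi>' in \<open>auto simp: U_def Q_def\<close>)
  moreover have "continuous_on {a..b} \<phi>"
    by (rule DERIV_continuous_on[where D = \<phi>']) (use \<phi> in \<open>auto intro: has_field_derivative_at_within\<close>)
  ultimately show ?thesis
    using integral_powr_deviation_le[OF assms(3) _ cU assms(7) deviation h_nonneg] by linarith
qed

lemma set_nn_integral_interval_eq_integral:
  fixes f :: "real \<Rightarrow> real"
  assumes "continuous_on {a..b} f" "\<And>x. x \<in> {a..b} \<Longrightarrow> 0 \<le> f x"
  shows "(\<integral>\<^sup>+x\<in>{a..b}. ennreal (f x) \<partial>lborel) = ennreal (integral {a..b} f)"
  using assms by (intro nn_integral_has_integral_lebesgue')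
    (auto intro: integrable_integral integrable_continuous_interval)

lemma set_nn_integral_interval_le_of_integral_le:
  fixes f g :: "real \<Rightarrow> real"
  assumes "continuous_on {a..b} f" "continuous_on {a..b} g"
    and "\<And>x. x \<in> {a..b} \<Longrightarrow> 0 \<le> f x" "\<And>x. x \<in> {a..b} \<Longrightarrow> 0 \<le> g x"
    and "integral {a..b} f \<le> K * integral {a..b} g" "0 \<le> K"
  shows "(\<integral>\<^sup>+x\<in>{a..b}. ennreal (f x) \<partial>lborel) \<le> ennreal K * (\<integral>\<^sup>+x\<in>{a..b}. ennreal (g x) \<partial>lborel)"
proof -
  have "(\<integral>\<^sup>+x\<in>{a..b}. ennreal (f x) \<partial>lborel) = ennreal (integral {a..b} f)"
    using assms by (intro set_nn_integral_interval_eq_integral)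
  also have "\<dots> \<le> ennreal (K * integral {a..b} g)"
    using assms(5) by (rule ennreal_leI)
  also have "\<dots> = ennreal K * ennreal (integral {a..b} g)"
    using \<open>0 \<le> K\<close> by (rule ennreal_mult')
  also have "ennreal (integral {a..b} g) = (\<integral>\<^sup>+x\<in>{a..b}. ennreal (g x) \<partial>lborel)"
    using assms by (intro set_nn_integral_interval_eq_integral[symmetric])
  finally show ?thesis .
qed

lemma integral_le_of_set_nn_integral_le:
  fixes h :: "real \<Rightarrow> real"
  assumes "continuous_on {a..b} h" "\<And>x. x \<in> {a..b} \<Longrightarrow> 0 \<le> h x" "{a..b} \<subseteq> S"
    and "(\<integral>\<^sup>+x\<in>S. ennreal (h x) \<partial>lborel) \<le> ennreal y" "0 \<le> y"
  shows "integral {a..b} h \<le> y"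
proof -
  have "ennreal (integral {a..b} h) = (\<integral>\<^sup>+x\<in>{a..b}. ennreal (h x) \<partial>lborel)"
    using assms(1,2) by (intro set_nn_integral_interval_eq_integral[symmetric])
  also have "\<dots> \<le> (\<integral>\<^sup>+x\<in>S. ennreal (h x) \<partial>lborel)"
    using assms(3) by (rule nn_set_integral_set_mono)
  finally have "ennreal (integral {a..b} h) \<le> (\<integral>\<^sup>+x\<in>S. ennreal (h x) \<partial>lborel)" .
  then show ?thesis
    using assms(4,5) ennreal_le_iff by (metis order_trans)
qed

lemma borel_measurable_continuous_on_ennreal_indicator:
  fixes f :: "real \<Rightarrow> real"
  assumes "continuous_on A f" "A \<in> sets borel"
  shows "(\<lambda>x. ennreal (f x) * indicator A x) \<in> borel_measurable borel"
proof -
  have "(\<lambda>x. ennreal (indicator A x *\<^sub>R f x)) \<in> borel_measurable borel"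
    using borel_measurable_continuous_on_indicator[OF assms(2,1)] by measurable
  also have "(\<lambda>x. ennreal (indicator A x *\<^sub>R f x)) = (\<lambda>x. ennreal (f x) * indicator A x)"
    by (auto simp: indicator_def)
  finally show ?thesis .
qed

lemma nn_set_integral_le_of_incseq:
  fixes g :: "real \<Rightarrow> ennreal" and A :: "nat \<Rightarrow> real set"
  assumes "incseq A" "(\<Union>n. A n) = S"
    and "\<And>n. (\<lambda>x. g x * indicator (A n) x) \<in> borel_measurable borel"
    and "\<And>n. (\<integral>\<^sup>+x\<in>A n. g x \<partial>lborel) \<le> B"
  shows "(\<integral>\<^sup>+x\<in>S. g x \<partial>lborel) \<le> B"
proof -
  have "g x * indicator S x = (SUP n. g x * indicator (A n) x)" for x
  proof (cases "x \<in> S")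
    case True
    then obtain n where n: "x \<in> A n" using assms(2) by auto
    have "(SUP n. g x * indicator (A n) x) = g x"
      by (rule antisym) (auto intro!: SUP_least SUP_upper2[of n] simp: n indicator_def)
    with True show ?thesis by simp
  next
    case False
    then have "x \<notin> A n" for n using assms(2) by auto
    with False show ?thesis by simp
  qed
  then have "(\<lambda>x. g x * indicator S x) = (\<lambda>x. SUP n. g x * indicator (A n) x)" by simp
  moreover have "incseq (\<lambda>n x. g x * indicator (A n) x)"
    using assms(1) by (auto simp: incseq_def le_fun_def indicator_def intro: mult_left_mono)
  ultimately have "(\<integral>\<^sup>+x\<in>S. g x \<partial>lborel) = (SUP n. (\<integral>\<^sup>+x\<in>A n. g x \<partial>lborel))"
    using assms(3) by (simp add: nn_integral_monotone_convergence_SUP measurable_lborel1)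
  also have "\<dots> \<le> B"
    using assms(4) by (intro SUP_least)
  finally show ?thesis .
qed

lemma nn_set_integral_split_at:
  fixes f :: "real \<Rightarrow> ennreal" and a :: real
  assumes "a > 0" and [measurable]: "(\<lambda>x. f x * indicator {0<..} x) \<in> borel_measurable borel"
  shows "(\<integral>\<^sup>+x\<in>{0<..}. f x \<partial>lborel) = (\<integral>\<^sup>+x\<in>{0<..a}. f x \<partial>lborel) + (\<integral>\<^sup>+x\<in>{a..}. f x \<partial>lborel)"
proof -
  define F where "F x = f x * indicator {0<..} x" for x
  have [measurable]: "F \<in> borel_measurable lborel"
    unfolding F_def by measurable
  have "(\<integral>\<^sup>+x\<in>{0<..a} \<union> {a<..}. F x \<partial>lborel) = (\<integral>\<^sup>+x\<in>{0<..a}. F x \<partial>lborel) + (\<integral>\<^sup>+x\<in>{a<..}. F x \<partial>lborel)"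
    by (rule nn_integral_disjoint_pair) auto
  moreover have "{0<..a} \<union> {a<..} = {0<..}"
    using \<open>a > 0\<close> by auto
  moreover have "(\<integral>\<^sup>+x\<in>{a<..}. F x \<partial>lborel) = (\<integral>\<^sup>+x\<in>{a..}. f x \<partial>lborel)"
    using AE_lborel_singleton[of a] \<open>a > 0\<close>
    by (intro nn_integral_cong_AE) (auto elim!: eventually_mono simp: F_def indicator_def)
  moreover have restrict: "(\<integral>\<^sup>+x\<in>B. F x \<partial>lborel) = (\<integral>\<^sup>+x\<in>B. f x \<partial>lborel)" if "B \<subseteq> {0<..}" for B
    using that by (intro nn_integral_cong) (auto simp: F_def indicator_def)
  ultimately show ?thesis
    using restrict[of "{0<..}"] restrict[of "{0<..a}"] by fastforce
qed

lemma UN_atLeastAtMost_add_real: "(\<Union>n. {a..a + real n}) = {a..}"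
proof (intro subset_antisym subsetI)
  fix x :: real assume "x \<in> {a..}"
  moreover obtain n where "x - a \<le> real n" using real_arch_simple by blast
  ultimately show "x \<in> (\<Union>n. {a..a + real n})" by (auto simp: algebra_simps)
qed auto

lemma UN_atLeastAtMost_divide_Suc:
  fixes a :: real
  assumes "0 < a"
  shows "(\<Union>n. {a / Suc n..a}) = {0<..a}"
proof (intro subset_antisym subsetI)
  fix x assume x: "x \<in> {0<..a}"
  obtain n where "a / x \<le> real n" using real_arch_simple by blast
  with x have "a / Suc n \<le> x"
    by (simp add: field_simps)
  with x show "x \<in> (\<Union>n. {a / Suc n..a})" by auto
next
  fix x assume "x \<in> (\<Union>n. {a / Suc n..a})"
  then obtain n where "a / Suc n \<le> x" "x \<le> a" by auto
  moreover have "0 < a / Suc n" using assms by simp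
  ultimately show "x \<in> {0<..a}" by auto
qed

lemma Hardy_deviation_right_halfline:
  fixes \<phi> \<phi>' h :: "real \<Rightarrow> real" and xbar c p :: real
  assumes "0 < xbar" "1 \<le> p" "0 \<le> c"
    and \<phi>: "\<And>x. 0 < x \<Longrightarrow> (\<phi> has_real_derivative \<phi>' x) (at x)"
    and c\<phi>': "continuous_on {0<..} \<phi>'" and ch: "continuous_on {0<..} h"
    and h_nonneg: "\<And>x. 0 < x \<Longrightarrow> 0 \<le> h x"
    and tail: "\<And>x. xbar \<le> x \<Longrightarrow> (\<integral>\<^sup>+t\<in>{x..}. ennreal (h t) \<partial>lborel) \<le> ennreal (c * x * h x)"
  shows "(\<integral>\<^sup>+x\<in>{xbar..}. ennreal (\<bar>\<phi> x - \<phi> xbar\<bar> powr p * h x) \<partial>lborel)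
       \<le> ennreal ((p * c) powr p) * (\<integral>\<^sup>+x\<in>{xbar..}. ennreal (x powr p * \<bar>\<phi>' x\<bar> powr p * h x) \<partial>lborel)"
proof (rule nn_set_integral_le_of_incseq[where A = "\<lambda>n. {xbar..xbar + real n}"])
  show "incseq (\<lambda>n. {xbar..xbar + real n})"
    by (auto simp: incseq_def)
  show "(\<Union>n. {xbar..xbar + real n}) = {xbar..}"
    by (fact UN_atLeastAtMost_add_real)
  fix n
  define R where "R = xbar + real n"
  have sub: "{xbar..R} \<subseteq> {0<..}" using \<open>0 < xbar\<close> by auto
  have c\<phi>: "continuous_on {xbar..R} \<phi>"
    using \<phi> \<open>0 < xbar\<close> by (intro DERIV_continuous_on[where D = \<phi>']) (auto intro: has_field_derivative_at_within)
  have cF: "continuous_on {xbar..R} (\<lambda>x. \<bar>\<phi> x - \<phi> xbar\<bar> powr p * h x)"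
    using \<open>1 \<le> p\<close> c\<phi> continuous_on_subset[OF ch sub]
    by (intro continuous_intros continuous_on_powr') auto
  have cW: "continuous_on {xbar..R} (\<lambda>x. x powr p * \<bar>\<phi>' x\<bar> powr p * h x)"
    using \<open>1 \<le> p\<close> continuous_on_subset[OF c\<phi>' sub] continuous_on_subset[OF ch sub] \<open>0 < xbar\<close>
    by (intro continuous_intros continuous_on_powr') auto
  show "(\<lambda>x. ennreal (\<bar>\<phi> x - \<phi> xbar\<bar> powr p * h x) * indicator {xbar..xbar + real n} x)
      \<in> borel_measurable borel"
    using cF unfolding R_def by (intro borel_measurable_continuous_on_ennreal_indicator) auto
  have "integral {xbar..R} (\<lambda>x. \<bar>\<phi> x - \<phi> xbar\<bar> powr p * h x)
      \<le> (p * c) powr p * integral {xbar..R} (\<lambda>x. x powr p * \<bar>\<phi>' x\<bar> powr p * h x)"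
  proof (rule Hardy_deviation_from_left_endpoint)
    show "integral {x..R} h \<le> c * x * h x" if "x \<in> {xbar..R}" for x
      using that sub tail[of x] h_nonneg \<open>0 \<le> c\<close> \<open>0 < xbar\<close>
      by (intro integral_le_of_set_nn_integral_le[where S = "{x..}"] continuous_on_subset[OF ch]) auto
  qed (use \<open>0 < xbar\<close> \<open>1 \<le> p\<close> \<open>0 \<le> c\<close> \<phi> h_nonneg sub continuous_on_subset[OF c\<phi>' sub]
        continuous_on_subset[OF ch sub] in \<open>auto simp: R_def\<close>)
  then have "(\<integral>\<^sup>+x\<in>{xbar..R}. ennreal (\<bar>\<phi> x - \<phi> xbar\<bar> powr p * h x) \<partial>lborel)
      \<le> ennreal ((p * c) powr p) * (\<integral>\<^sup>+x\<in>{xbar..R}. ennreal (x powr p * \<bar>\<phi>' x\<bar> powr p * h x) \<partial>lborel)"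
    using cF cW sub h_nonneg by (intro set_nn_integral_interval_le_of_integral_le) auto
  also have "\<dots> \<le> ennreal ((p * c) powr p) * (\<integral>\<^sup>+x\<in>{xbar..}. ennreal (x powr p * \<bar>\<phi>' x\<bar> powr p * h x) \<partial>lborel)"
    by (intro mult_left_mono nn_set_integral_set_mono) auto
  finally show "(\<integral>\<^sup>+x\<in>{xbar..xbar + real n}. ennreal (\<bar>\<phi> x - \<phi> xbar\<bar> powr p * h x) \<partial>lborel)
      \<le> ennreal ((p * c) powr p) * (\<integral>\<^sup>+x\<in>{xbar..}. ennreal (x powr p * \<bar>\<phi>' x\<bar> powr p * h x) \<partial>lborel)"
    unfolding R_def .
qed

lemma Hardy_deviation_left_halfline:
  fixes \<phi> \<phi>' h :: "real \<Rightarrow> real" and xbar c p :: real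
  assumes "0 < xbar" "1 \<le> p" "0 \<le> c"
    and \<phi>: "\<And>x. 0 < x \<Longrightarrow> (\<phi> has_real_derivative \<phi>' x) (at x)"
    and c\<phi>': "continuous_on {0<..} \<phi>'" and ch: "continuous_on {0<..} h"
    and h_nonneg: "\<And>x. 0 < x \<Longrightarrow> 0 \<le> h x"
    and head: "\<And>x. 0 < x \<Longrightarrow> x \<le> xbar \<Longrightarrow> (\<integral>\<^sup>+t\<in>{0<..x}. ennreal (h t) \<partial>lborel) \<le> ennreal (c * x * h x)"
  shows "(\<integral>\<^sup>+x\<in>{0<..xbar}. ennreal (\<bar>\<phi> x - \<phi> xbar\<bar> powr p * h x) \<partial>lborel)
       \<le> ennreal ((p * c) powr p) * (\<integral>\<^sup>+x\<in>{0<..xbar}. ennreal (x powr p * \<bar>\<phi>' x\<bar> powr p * h x) \<partial>lborel)"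
proof (rule nn_set_integral_le_of_incseq[where A = "\<lambda>n. {xbar / Suc n..xbar}"])
  show "incseq (\<lambda>n. {xbar / Suc n..xbar})"
    using \<open>0 < xbar\<close> by (auto simp: incseq_def intro!: divide_left_mono)
  show "(\<Union>n. {xbar / Suc n..xbar}) = {0<..xbar}"
    using \<open>0 < xbar\<close> by (rule UN_atLeastAtMost_divide_Suc)
  fix n
  define r where "r = xbar / Suc n"
  have "0 < r" "r \<le> xbar"
    using \<open>0 < xbar\<close> by (auto simp: r_def field_simps)
  then have sub: "{r..xbar} \<subseteq> {0<..}" by auto
  have c\<phi>: "continuous_on {r..xbar} \<phi>"
    using \<phi> \<open>0 < r\<close> by (intro DERIV_continuous_on[where D = \<phi>']) (auto intro: has_field_derivative_at_within)
  have cF: "continuous_on {r..xbar} (\<lambda>x. \<bar>\<phi> x - \<phi> xbar\<bar> powr p * h x)"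
    using \<open>1 \<le> p\<close> c\<phi> continuous_on_subset[OF ch sub]
    by (intro continuous_intros continuous_on_powr') auto
  have cW: "continuous_on {r..xbar} (\<lambda>x. x powr p * \<bar>\<phi>' x\<bar> powr p * h x)"
    using \<open>1 \<le> p\<close> continuous_on_subset[OF c\<phi>' sub] continuous_on_subset[OF ch sub] \<open>0 < r\<close>
    by (intro continuous_intros continuous_on_powr') auto
  show "(\<lambda>x. ennreal (\<bar>\<phi> x - \<phi> xbar\<bar> powr p * h x) * indicator {xbar / Suc n..xbar} x)
      \<in> borel_measurable borel"
    using cF unfolding r_def by (intro borel_measurable_continuous_on_ennreal_indicator) auto
  have "integral {r..xbar} (\<lambda>x. \<bar>\<phi> x - \<phi> xbar\<bar> powr p * h x)
      \<le> (p * c) powr p * integral {r..xbar} (\<lambda>x. x powr p * \<bar>\<phi>' x\<bar> powr p * h x)"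
  proof (rule Hardy_deviation_from_right_endpoint)
    show "integral {r..x} h \<le> c * x * h x" if "x \<in> {r..xbar}" for x
      using that sub head[of x] h_nonneg \<open>0 \<le> c\<close> \<open>0 < r\<close>
      by (intro integral_le_of_set_nn_integral_le[where S = "{0<..x}"] continuous_on_subset[OF ch]) auto
  qed (use \<open>0 < r\<close> \<open>r \<le> xbar\<close> \<open>1 \<le> p\<close> \<open>0 \<le> c\<close> \<phi> h_nonneg sub continuous_on_subset[OF c\<phi>' sub]
        continuous_on_subset[OF ch sub] in auto)
  then have "(\<integral>\<^sup>+x\<in>{r..xbar}. ennreal (\<bar>\<phi> x - \<phi> xbar\<bar> powr p * h x) \<partial>lborel)
      \<le> ennreal ((p * c) powr p) * (\<integral>\<^sup>+x\<in>{r..xbar}. ennreal (x powr p * \<bar>\<phi>' x\<bar> powr p * h x) \<partial>lborel)"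
    using cF cW sub h_nonneg by (intro set_nn_integral_interval_le_of_integral_le) auto
  also have "\<dots> \<le> ennreal ((p * c) powr p) * (\<integral>\<^sup>+x\<in>{0<..xbar}. ennreal (x powr p * \<bar>\<phi>' x\<bar> powr p * h x) \<partial>lborel)"
    using \<open>0 < r\<close> by (intro mult_left_mono nn_set_integral_set_mono) auto
  finally show "(\<integral>\<^sup>+x\<in>{xbar / Suc n..xbar}. ennreal (\<bar>\<phi> x - \<phi> xbar\<bar> powr p * h x) \<partial>lborel)
      \<le> ennreal ((p * c) powr p) * (\<integral>\<^sup>+x\<in>{0<..xbar}. ennreal (x powr p * \<bar>\<phi>' x\<bar> powr p * h x) \<partial>lborel)"
    unfolding r_def .
qed

section \<open>Centering at the mean\<close>

lemma le_one_plus_powr: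
  fixes t p :: real
  assumes "0 \<le> t" "1 \<le> p"
  shows "t \<le> 1 + t powr p"
proof (cases "t \<le> 1")
  case False
  then have "t powr 1 \<le> t powr p"
    using assms by (intro powr_mono) auto
  then show ?thesis using False by simp
qed (simp add: add_increasing2)

lemma integrable_mult_of_integrable_powr:
  fixes M :: "'a measure" and g H :: "'a \<Rightarrow> real" and p :: real
  assumes "1 \<le> p" and H: "integrable M H" "\<And>x. 0 \<le> H x"
    and g: "g \<in> borel_measurable M" "integrable M (\<lambda>x. \<bar>g x\<bar> powr p * H x)"
  shows "integrable M (\<lambda>x. \<bar>g x\<bar> * H x)" and "integrable M (\<lambda>x. g x * H x)"
proof -
  have [measurable]: "H \<in> borel_measurable M" using H(1) by auto
  show int_abs: "integrable M (\<lambda>x. \<bar>g x\<bar> * H x)"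
  proof (rule Bochner_Integration.integrable_bound[OF Bochner_Integration.integrable_add[OF H(1) g(2)]])
    show "AE x in M. norm (\<bar>g x\<bar> * H x) \<le> norm (H x + \<bar>g x\<bar> powr p * H x)"
    proof (intro AE_I2)
      fix x
      have "\<bar>g x\<bar> * H x \<le> (1 + \<bar>g x\<bar> powr p) * H x"
        using H(2) \<open>1 \<le> p\<close> by (intro mult_right_mono le_one_plus_powr) auto
      then show "norm (\<bar>g x\<bar> * H x) \<le> norm (H x + \<bar>g x\<bar> powr p * H x)"
        using H(2)[of x] by (simp add: abs_mult algebra_simps)
    qed
  qed (use g(1) in measurable)
  then show "integrable M (\<lambda>x. g x * H x)"
    by (rule Bochner_Integration.integrable_bound) (use g(1) H(2) in \<open>auto simp: abs_mult\<close>)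
qed

lemma powr_abs_integral_le_integral_powr_abs:
  fixes M :: "'a measure" and g H :: "'a \<Rightarrow> real" and p :: real
  assumes "1 \<le> p" and H: "integrable M H" "\<And>x. 0 \<le> H x" "(\<integral>x. H x \<partial>M) = 1"
    and g: "g \<in> borel_measurable M" "integrable M (\<lambda>x. \<bar>g x\<bar> powr p * H x)"
  shows "integrable M (\<lambda>x. g x * H x)"
    and "\<bar>\<integral>x. g x * H x \<partial>M\<bar> powr p \<le> (\<integral>x. \<bar>g x\<bar> powr p * H x \<partial>M)"
proof -
  note int_abs = integrable_mult_of_integrable_powr(1)[OF assms(1,2,3,5,6)]
  show int_g: "integrable M (\<lambda>x. g x * H x)"
    by (fact integrable_mult_of_integrable_powr(2)[OF assms(1,2,3,5,6)])
  define s where "s = (\<integral>x. \<bar>g x\<bar> * H x \<partial>M)"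
  define J where "J = (\<integral>x. \<bar>g x\<bar> powr p * H x \<partial>M)"
  have "\<bar>\<integral>x. g x * H x \<partial>M\<bar> \<le> s"
  proof -
    have "norm (\<integral>x. g x * H x \<partial>M) \<le> (\<integral>x. norm (g x * H x) \<partial>M)"
      by (rule integral_norm_bound)
    also have "\<dots> = s"
      unfolding s_def using H(2) by (simp add: abs_mult)
    finally show ?thesis by simp
  qed
  then have "\<bar>\<integral>x. g x * H x \<partial>M\<bar> powr p \<le> s powr p"
    using \<open>1 \<le> p\<close> by (intro powr_mono2) auto
  also have "s powr p \<le> J"
  proof (cases "s = 0")
    case True
    then show ?thesis
      unfolding J_def using H(2) by (auto intro: integral_nonneg_AE)
  next
    case False
    then have "s > 0" unfolding s_def using H(2) by (simp add: less_le integral_nonneg_AE)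
    have Young: "s powr (p - 1) * (\<bar>g x\<bar> * H x) \<le> (1 - 1/p) * s powr p * H x + (1/p) * (\<bar>g x\<bar> powr p * H x)" for x
      using mult_right_mono[OF powr_Youngs_inequality[OF \<open>s > 0\<close> abs_ge_zero[of "g x"] \<open>1 \<le> p\<close>] H(2)[of x]]
      by (simp add: algebra_simps)
    have "s powr (p - 1) * s = (\<integral>x. s powr (p - 1) * (\<bar>g x\<bar> * H x) \<partial>M)"
      unfolding s_def by simp
    also have "\<dots> \<le> (\<integral>x. (1 - 1/p) * s powr p * H x + (1/p) * (\<bar>g x\<bar> powr p * H x) \<partial>M)"
      by (intro integral_mono Young integrable_mult_right int_abs Bochner_Integration.integrable_add H(1) g(2))
    also have "\<dots> = (1 - 1/p) * s powr p + (1/p) * J"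
      using H(1,3) g(2) unfolding J_def by simp
    finally have "s powr (p - 1) * s \<le> (1 - 1/p) * s powr p + (1/p) * J" .
    moreover have "s powr (p - 1) * s = s powr p"
      using \<open>s > 0\<close> by (simp add: powr_diff)
    ultimately show ?thesis
      using \<open>1 \<le> p\<close> by (simp add: field_simps)
  qed
  finally show "\<bar>\<integral>x. g x * H x \<partial>M\<bar> powr p \<le> (\<integral>x. \<bar>g x\<bar> powr p * H x \<partial>M)"
    unfolding J_def .
qed

lemma powr_abs_mean_deviation_le:
  fixes \<phi> h :: "real \<Rightarrow> real" and S :: "real set" and a p :: real
  assumes "1 \<le> p" "S \<in> sets borel" "continuous_on S \<phi>" "continuous_on S h"
    and h_nonneg: "\<And>x. x \<in> S \<Longrightarrow> 0 \<le> h x" and h_prob: "(\<integral>\<^sup>+x\<in>S. ennreal (h x) \<partial>lborel) = 1"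
  shows "ennreal (\<bar>(LINT y:S|lborel. \<phi> y * h y) - a\<bar> powr p)
       \<le> (\<integral>\<^sup>+x\<in>S. ennreal (\<bar>\<phi> x - a\<bar> powr p * h x) \<partial>lborel)"
    (is "_ \<le> ?I")
proof (cases "?I = \<infinity>")
  case False
  define H where "H x = indicator S x * h x" for x
  define g where "g x = indicator S x * (\<phi> x - a)" for x
  have "continuous_on S (\<lambda>x. \<phi> x - a)"
    by (intro continuous_intros assms(3))
  then have [measurable]: "H \<in> borel_measurable lborel" "g \<in> borel_measurable lborel"
    unfolding H_def g_def measurable_lborel1
    using borel_measurable_continuous_on_indicator[OF assms(2) assms(4)]
      borel_measurable_continuous_on_indicator[OF assms(2), of "\<lambda>x. \<phi> x - a"] by auto
  have H_nonneg: "0 \<le> H x" for x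
    using h_nonneg by (simp add: H_def indicator_def)
  have gH: "\<bar>g x\<bar> powr p * H x = indicator S x * (\<bar>\<phi> x - a\<bar> powr p * h x)" for x
    using \<open>1 \<le> p\<close> by (simp add: g_def H_def indicator_def)
  have nn_H: "(\<integral>\<^sup>+x. ennreal (H x) \<partial>lborel) = 1"
    unfolding h_prob[symmetric] by (intro nn_integral_cong) (simp add: H_def indicator_def)
  have nn_gH: "(\<integral>\<^sup>+x. ennreal (\<bar>g x\<bar> powr p * H x) \<partial>lborel) = ?I"
    unfolding gH by (intro nn_integral_cong) (simp add: indicator_def)
  have int_H: "integrable lborel H"
    using nn_H H_nonneg by (intro integrableI_nonneg) auto
  have int_gH: "integrable lborel (\<lambda>x. \<bar>g x\<bar> powr p * H x)"
    using nn_gH False H_nonneg by (intro integrableI_nonneg) (auto simp: top.not_eq_extremum)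
  have H_prob: "(\<integral>x. H x \<partial>lborel) = 1"
    using nn_integral_eq_integral[OF int_H] H_nonneg nn_H by simp
  note Jensen = powr_abs_integral_le_integral_powr_abs[OF \<open>1 \<le> p\<close> int_H H_nonneg H_prob _ int_gH]
  have "(LINT y:S|lborel. \<phi> y * h y) = (\<integral>x. g x * H x + a * H x \<partial>lborel)"
    unfolding set_lebesgue_integral_def
    by (intro Bochner_Integration.integral_cong) (auto simp: g_def H_def indicator_def algebra_simps)
  also have "\<dots> = (\<integral>x. g x * H x \<partial>lborel) + a"
    using Jensen(1) int_H H_prob by simp
  finally have "\<bar>(LINT y:S|lborel. \<phi> y * h y) - a\<bar> powr p \<le> (\<integral>x. \<bar>g x\<bar> powr p * H x \<partial>lborel)"
    using Jensen(2) by simp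
  also have "ennreal \<dots> = ?I"
    using nn_integral_eq_integral[OF int_gH] H_nonneg nn_gH by simp
  finally show ?thesis
    by (simp add: ennreal_leI)
qed simp

lemma powr_add_le_two_powr:
  fixes u v p :: real
  assumes "0 \<le> u" "0 \<le> v" "1 \<le> p"
  shows "(u + v) powr p \<le> 2 powr (p - 1) * (u powr p + v powr p)"
proof (cases "u = 0 \<or> v = 0")
  case True
  have "1 \<le> 2 powr (p - 1)" using assms(3) by (simp add: ge_one_powr_ge_zero)
  with True assms show ?thesis by (auto intro: order_trans[OF _ mult_right_mono[of 1]])
next
  case False
  then have "((1 - 1/2) *\<^sub>R u + (1/2) *\<^sub>R v) powr p \<le> (1 - 1/2) * u powr p + (1/2) * v powr p"
    using assms by (intro convex_onD[OF powr_convex[OF assms(3)]]) auto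
  then have mid: "((u + v) / 2) powr p \<le> (u powr p + v powr p) / 2"
    by (simp add: field_simps)
  have "(u + v) powr p = 2 powr p * ((u + v) / 2) powr p"
    using assms by (subst powr_mult[symmetric]) (auto simp: add_divide_distrib)
  also have "\<dots> \<le> 2 powr p * ((u powr p + v powr p) / 2)"
    using mid by (intro mult_left_mono) auto
  also have "\<dots> = 2 powr (p - 1) * (u powr p + v powr p)"
    by (simp add: powr_diff)
  finally show ?thesis .
qed

lemma powr_abs_diff_le_two_powr:
  fixes y z a p :: real
  assumes "1 \<le> p"
  shows "\<bar>y - z\<bar> powr p \<le> 2 powr (p - 1) * (\<bar>y - a\<bar> powr p + \<bar>z - a\<bar> powr p)"
proof -
  have "\<bar>y - z\<bar> powr p \<le> (\<bar>y - a\<bar> + \<bar>z - a\<bar>) powr p"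
    using assms by (intro powr_mono2) auto
  also have "\<dots> \<le> 2 powr (p - 1) * (\<bar>y - a\<bar> powr p + \<bar>z - a\<bar> powr p)"
    using assms by (intro powr_add_le_two_powr) auto
  finally show ?thesis .
qed

lemma nn_integral_centered_powr_le:
  fixes \<phi> h :: "real \<Rightarrow> real" and S :: "real set" and a p :: real
  assumes "1 \<le> p" "S \<in> sets borel" "continuous_on S \<phi>" "continuous_on S h"
    and h_nonneg: "\<And>x. x \<in> S \<Longrightarrow> 0 \<le> h x" and h_prob: "(\<integral>\<^sup>+x\<in>S. ennreal (h x) \<partial>lborel) = 1"
  shows "(\<integral>\<^sup>+x\<in>S. ennreal (\<bar>\<phi> x - (LINT y:S|lborel. \<phi> y * h y)\<bar> powr p * h x) \<partial>lborel)
       \<le> ennreal (2 powr p) * (\<integral>\<^sup>+x\<in>S. ennreal (\<bar>\<phi> x - a\<bar> powr p * h x) \<partial>lborel)"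
proof -
  define E where "E = (LINT y:S|lborel. \<phi> y * h y)"
  define e where "e = \<bar>E - a\<bar> powr p"
  define F where "F x = \<bar>\<phi> x - a\<bar> powr p * h x" for x
  define I where "I = (\<integral>\<^sup>+x\<in>S. ennreal (F x) \<partial>lborel)"
  have pointwise: "ennreal (\<bar>\<phi> x - E\<bar> powr p * h x) * indicator S x
      \<le> ennreal (2 powr (p - 1)) * (ennreal (F x) * indicator S x + ennreal e * (ennreal (h x) * indicator S x))"
    for x
  proof (cases "x \<in> S")
    case True
    have "\<bar>\<phi> x - E\<bar> powr p * h x \<le> 2 powr (p - 1) * (\<bar>\<phi> x - a\<bar> powr p + e) * h x"
      unfolding e_def using h_nonneg[OF True] \<open>1 \<le> p\<close>
      by (intro mult_right_mono powr_abs_diff_le_two_powr)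
    then have "ennreal (\<bar>\<phi> x - E\<bar> powr p * h x) \<le> ennreal (2 powr (p - 1) * (F x + e * h x))"
      by (intro ennreal_leI) (simp add: F_def algebra_simps)
    also have "\<dots> = ennreal (2 powr (p - 1)) * (ennreal (F x) + ennreal e * ennreal (h x))"
      using h_nonneg[OF True] by (simp add: F_def e_def ennreal_mult' ennreal_plus[symmetric])
    finally show ?thesis
      using True by simp
  qed simp
  have "continuous_on S F"
    unfolding F_def using \<open>1 \<le> p\<close> by (intro continuous_intros continuous_on_powr' assms(3,4)) auto
  then have meas: "(\<lambda>x. ennreal (F x) * indicator S x) \<in> borel_measurable lborel"
    "(\<lambda>x. ennreal (h x) * indicator S x) \<in> borel_measurable lborel"
    unfolding measurable_lborel1 using assms(2,4)
    by (simp_all add: borel_measurable_continuous_on_ennreal_indicator)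
  have "(\<integral>\<^sup>+x\<in>S. ennreal (\<bar>\<phi> x - E\<bar> powr p * h x) \<partial>lborel)
      \<le> (\<integral>\<^sup>+x. ennreal (2 powr (p - 1)) * (ennreal (F x) * indicator S x
          + ennreal e * (ennreal (h x) * indicator S x)) \<partial>lborel)"
    using pointwise by (rule nn_integral_mono)
  also have "\<dots> = ennreal (2 powr (p - 1)) * (I + ennreal e)"
    using meas h_prob by (simp add: I_def nn_integral_cmult nn_integral_add)
  also have "\<dots> \<le> ennreal (2 powr (p - 1)) * (I + I)"
    using powr_abs_mean_deviation_le[OF assms] unfolding e_def E_def I_def F_def
    by (intro mult_left_mono add_left_mono) auto
  also have "\<dots> = ennreal (2 powr (p - 1)) * ennreal 2 * I"
    by (simp add: mult_2 mult.assoc)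
  also have "ennreal (2 powr (p - 1)) * ennreal 2 = ennreal (2 powr p)"
    by (subst ennreal_mult'[symmetric]) (auto simp: powr_diff)
  finally show ?thesis
    unfolding E_def I_def F_def .
qed

section \<open>Poincare inequality under hazard bounds\<close>

lemma Poincare_inequality_from_hazard_bounds:
  fixes \<phi> \<phi>' h :: "real \<Rightarrow> real" and xbar c p :: real
  assumes "0 < xbar" "1 \<le> p" "0 \<le> c"
    and \<phi>: "\<And>x. 0 < x \<Longrightarrow> (\<phi> has_real_derivative \<phi>' x) (at x)"
    and c\<phi>': "continuous_on {0<..} \<phi>'" and ch: "continuous_on {0<..} h"
    and h_nonneg: "\<And>x. 0 < x \<Longrightarrow> 0 \<le> h x"
    and h_prob: "(\<integral>\<^sup>+x\<in>{0<..}. ennreal (h x) \<partial>lborel) = 1"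
    and head: "\<And>x. 0 < x \<Longrightarrow> x \<le> xbar \<Longrightarrow> (\<integral>\<^sup>+t\<in>{0<..x}. ennreal (h t) \<partial>lborel) \<le> ennreal (c * x * h x)"
    and tail: "\<And>x. xbar \<le> x \<Longrightarrow> (\<integral>\<^sup>+t\<in>{x..}. ennreal (h t) \<partial>lborel) \<le> ennreal (c * x * h x)"
  shows "(\<integral>\<^sup>+x\<in>{0<..}. ennreal (\<bar>\<phi> x - (LINT y:{0<..}|lborel. \<phi> y * h y)\<bar> powr p * h x) \<partial>lborel)
       \<le> ennreal ((2 * p * c) powr p) * (\<integral>\<^sup>+x\<in>{0<..}. ennreal (x powr p * \<bar>\<phi>' x\<bar> powr p * h x) \<partial>lborel)"
proof -
  define G where "G x = ennreal (\<bar>\<phi> x - \<phi> xbar\<bar> powr p * h x)" for x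
  define W where "W x = ennreal (x powr p * \<bar>\<phi>' x\<bar> powr p * h x)" for x
  define K where "K = ennreal ((p * c) powr p)"
  have c\<phi>: "continuous_on {0<..} \<phi>"
    using \<phi> by (intro DERIV_continuous_on[where D = \<phi>']) (auto intro: has_field_derivative_at_within)
  have "(\<lambda>x. G x * indicator {0<..} x) \<in> borel_measurable borel"
    "(\<lambda>x. W x * indicator {0<..} x) \<in> borel_measurable borel"
    unfolding G_def W_def using \<open>1 \<le> p\<close>
    by (auto intro!: borel_measurable_continuous_on_ennreal_indicator continuous_intros
        continuous_on_powr' c\<phi> c\<phi>' ch)
  note split = this[THEN nn_set_integral_split_at[OF \<open>0 < xbar\<close>]]
  have "(\<integral>\<^sup>+x\<in>{0<..}. G x \<partial>lborel) = (\<integral>\<^sup>+x\<in>{0<..xbar}. G x \<partial>lborel) + (\<integral>\<^sup>+x\<in>{xbar..}. G x \<partial>lborel)"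
    by (fact split(1))
  also have "\<dots> \<le> K * (\<integral>\<^sup>+x\<in>{0<..xbar}. W x \<partial>lborel) + K * (\<integral>\<^sup>+x\<in>{xbar..}. W x \<partial>lborel)"
    unfolding G_def W_def K_def
    by (intro add_mono Hardy_deviation_left_halfline Hardy_deviation_right_halfline assms)
  also have "\<dots> = K * (\<integral>\<^sup>+x\<in>{0<..}. W x \<partial>lborel)"
    by (simp add: split(2) distrib_left)
  finally have deviation: "(\<integral>\<^sup>+x\<in>{0<..}. G x \<partial>lborel) \<le> K * (\<integral>\<^sup>+x\<in>{0<..}. W x \<partial>lborel)" .
  have "(\<integral>\<^sup>+x\<in>{0<..}. ennreal (\<bar>\<phi> x - (LINT y:{0<..}|lborel. \<phi> y * h y)\<bar> powr p * h x) \<partial>lborel)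
      \<le> ennreal (2 powr p) * (\<integral>\<^sup>+x\<in>{0<..}. G x \<partial>lborel)"
    unfolding G_def using h_nonneg
    by (intro nn_integral_centered_powr_le \<open>1 \<le> p\<close> c\<phi> ch h_prob) auto
  also have "\<dots> \<le> ennreal (2 powr p) * K * (\<integral>\<^sup>+x\<in>{0<..}. W x \<partial>lborel)"
    using deviation by (simp add: mult.assoc mult_left_mono)
  also have "ennreal (2 powr p) * K = ennreal ((2 * p * c) powr p)"
    unfolding K_def using \<open>1 \<le> p\<close> \<open>0 \<le> c\<close> by (simp add: powr_mult mult.assoc flip: ennreal_mult)
  finally show ?thesis
    unfolding W_def .
qed

lemma C_const_nonneg: "0 \<le> C_const \<beta> m"
  unfolding C_const_def set_lebesgue_integral_def
  by (auto intro!: integral_nonneg_AE simp: indicator_def)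

lemma h_dens_nonneg: "0 \<le> h_dens \<beta> m x"
  unfolding h_dens_def using C_const_nonneg by simp

lemma h_dens_pos: "0 < C_const \<beta> m \<Longrightarrow> 0 < x \<Longrightarrow> 0 < h_dens \<beta> m x"
  unfolding h_dens_def by simp

lemma continuous_on_h_dens: "continuous_on {0<..} (h_dens \<beta> m)"
proof -
  have "continuous_on {0<..} (\<lambda>x. C_const \<beta> m * x powr (-2 * \<beta>) * exp (- m / x))"
    by (intro continuous_intros) auto
  then show ?thesis
    by (rule continuous_on_cong[THEN iffD1, rotated 2]) (auto simp: h_dens_def)
qed

lemma borel_measurable_h_dens [measurable]: "h_dens \<beta> m \<in> borel_measurable borel"
  unfolding h_dens_def by measurable

lemma
  assumes "0 < C_const \<beta> m"
  shows integrable_h_dens: "integrable lborel (h_dens \<beta> m)"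
    and set_integral_h_dens: "(LINT x:{0<..}|lborel. h_dens \<beta> m x) = 1"
proof -
  define k where "k x = x powr (-2 * \<beta>) * exp (- m / x)" for x
  define I where "I = (LINT x:{0<..}|lborel. k x)"
  have C: "C_const \<beta> m = 1 / I"
    unfolding C_const_def I_def k_def ..
  have h: "h_dens \<beta> m = (\<lambda>x. C_const \<beta> m * (indicator {0<..} x * k x))"
    by (auto simp: fun_eq_iff h_dens_def k_def indicator_def)
  have "set_integrable lborel {0<..} k"
    using assms not_integrable_integral_eq
    unfolding C I_def set_integrable_def set_lebesgue_integral_def by fastforce
  then show "integrable lborel (h_dens \<beta> m)"
    unfolding h set_integrable_def by simp
  show "(LINT x:{0<..}|lborel. h_dens \<beta> m x) = 1"
    using assms unfolding set_lebesgue_integral_def h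
    by (simp add: C I_def set_lebesgue_integral_def mult.assoc[symmetric] flip: indicator_inter_arith)
qed

lemma nn_set_integral_h_dens:
  assumes "0 < C_const \<beta> m" "A \<in> sets borel"
  shows "(\<integral>\<^sup>+x\<in>A. ennreal (h_dens \<beta> m x) \<partial>lborel) = ennreal (LINT x:A|lborel. h_dens \<beta> m x)"
  using assms by (intro nn_set_integral_eq_set_integral integrable_h_dens) (auto simp: h_dens_nonneg)

lemma C_const_pos_of_median:
  assumes "(LINT x:{0<..xbar}|lborel. h_dens \<beta> m x) = 1/2"
  shows "0 < C_const \<beta> m"
proof -
  have "C_const \<beta> m \<noteq> 0"
  proof
    assume "C_const \<beta> m = 0"
    then have "h_dens \<beta> m = (\<lambda>_. 0)" by (simp add: h_dens_def fun_eq_iff)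
    with assms show False by simp
  qed
  then show ?thesis
    using C_const_nonneg[of \<beta> m] by simp
qed

lemma nn_set_integral_dilation_le:
  fixes h :: "real \<Rightarrow> real" and A B :: "real set" and l K :: real
  assumes [measurable]: "h \<in> borel_measurable borel" "A \<in> sets borel" "B \<in> sets borel"
    and "0 < l" "0 \<le> K" "\<And>t. 0 \<le> h t"
    and dilation: "\<And>s. l * s \<in> A \<Longrightarrow> s \<in> B \<and> h (l * s) \<le> K * h s"
  shows "(\<integral>\<^sup>+t\<in>A. ennreal (h t) \<partial>lborel) \<le> ennreal (l * K) * (\<integral>\<^sup>+s\<in>B. ennreal (h s) \<partial>lborel)"
proof -
  have "(\<integral>\<^sup>+t\<in>A. ennreal (h t) \<partial>lborel) = ennreal l * (\<integral>\<^sup>+s. ennreal (h (l * s)) * indicator A (l * s) \<partial>lborel)"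
    using \<open>0 < l\<close> by (subst nn_integral_real_affine[where c = l and t = 0]) auto
  also have "\<dots> \<le> ennreal l * (\<integral>\<^sup>+s. ennreal K * (ennreal (h s) * indicator B s) \<partial>lborel)"
    using dilation \<open>0 \<le> K\<close>
    by (intro mult_left_mono nn_integral_mono)
      (auto simp: indicator_def ennreal_leI simp flip: ennreal_mult')
  also have "\<dots> = ennreal (l * K) * (\<integral>\<^sup>+s\<in>B. ennreal (h s) \<partial>lborel)"
    using \<open>0 < l\<close> \<open>0 \<le> K\<close> by (simp add: nn_integral_cmult ennreal_mult mult.assoc)
  finally show ?thesis .
qed

lemma h_dens_mult_le:
  assumes "0 < x" "0 < y" "0 < q" "0 \<le> m" and "0 \<le> (1/x - 1/y) * (1 - 1/q)"
  shows "h_dens \<beta> m (q * y) * h_dens \<beta> m x \<le> h_dens \<beta> m (q * x) * h_dens \<beta> m y"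
proof -
  define C where "C = C_const \<beta> m"
  have powers: "(q * y) powr (-2 * \<beta>) * x powr (-2 * \<beta>) = (q * x) powr (-2 * \<beta>) * y powr (-2 * \<beta>)"
    using assms by (simp add: powr_mult)
  have "- m / (q * y) + - m / x = - m / (q * x) + - m / y - m * ((1/x - 1/y) * (1 - 1/q))"
    using assms by (simp add: field_simps)
  also have "\<dots> \<le> - m / (q * x) + - m / y"
    using assms by simp
  finally have exps: "exp (- m / (q * y)) * exp (- m / x) \<le> exp (- m / (q * x)) * exp (- m / y)"
    by (simp flip: exp_add)
  have "h_dens \<beta> m (q * y) * h_dens \<beta> m x
      = (C * C) * ((q * y) powr (-2 * \<beta>) * x powr (-2 * \<beta>)) * (exp (- m / (q * y)) * exp (- m / x))"
    using assms by (simp add: h_dens_def C_def algebra_simps)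
  also have "\<dots> \<le> (C * C) * ((q * x) powr (-2 * \<beta>) * y powr (-2 * \<beta>)) * (exp (- m / (q * x)) * exp (- m / y))"
    unfolding powers using exps by (intro mult_left_mono) auto
  also have "\<dots> = h_dens \<beta> m (q * x) * h_dens \<beta> m y"
    using assms by (simp add: h_dens_def C_def algebra_simps)
  finally show ?thesis .
qed

lemma nn_set_integral_h_dens_tail_le:
  assumes "0 < C_const \<beta> m" "0 \<le> m" "0 < xbar" "xbar \<le> x"
  shows "(\<integral>\<^sup>+t\<in>{x..}. ennreal (h_dens \<beta> m t) \<partial>lborel)
       \<le> ennreal (x * h_dens \<beta> m x / (xbar * h_dens \<beta> m xbar)) * (\<integral>\<^sup>+t\<in>{xbar..}. ennreal (h_dens \<beta> m t) \<partial>lborel)"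
proof -
  define l where "l = x / xbar"
  have l: "0 < l" "1 \<le> l" "l * xbar = x" using assms unfolding l_def by auto
  have "(\<integral>\<^sup>+t\<in>{x..}. ennreal (h_dens \<beta> m t) \<partial>lborel)
      \<le> ennreal (l * (h_dens \<beta> m x / h_dens \<beta> m xbar)) * (\<integral>\<^sup>+t\<in>{xbar..}. ennreal (h_dens \<beta> m t) \<partial>lborel)"
  proof (rule nn_set_integral_dilation_le)
    fix s assume "l * s \<in> {x..}"
    then have s: "xbar \<le> s"
      using l mult_le_cancel_left_pos[of l xbar s] by simp
    have "0 \<le> (1/xbar - 1/s) * (1 - 1/l)"
      using s l \<open>0 < xbar\<close> by (intro mult_nonneg_nonneg) (auto simp: field_simps)
    then have "h_dens \<beta> m (l * s) * h_dens \<beta> m xbar \<le> h_dens \<beta> m x * h_dens \<beta> m s"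
      using h_dens_mult_le[of xbar s l m \<beta>] assms s l by simp
    then show "s \<in> {xbar..} \<and> h_dens \<beta> m (l * s) \<le> h_dens \<beta> m x / h_dens \<beta> m xbar * h_dens \<beta> m s"
      using s h_dens_pos[OF assms(1,3)] by (simp add: field_simps)
  qed (use l assms in \<open>auto simp: h_dens_nonneg\<close>)
  then show ?thesis
    by (simp add: l_def)
qed

lemma nn_set_integral_h_dens_head_le:
  assumes "0 < C_const \<beta> m" "0 \<le> m" "0 < x" "x \<le> xbar"
  shows "(\<integral>\<^sup>+t\<in>{0<..x}. ennreal (h_dens \<beta> m t) \<partial>lborel)
       \<le> ennreal (x * h_dens \<beta> m x / (xbar * h_dens \<beta> m xbar)) * (\<integral>\<^sup>+t\<in>{0<..xbar}. ennreal (h_dens \<beta> m t) \<partial>lborel)"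
proof -
  define l where "l = x / xbar"
  have l: "0 < l" "l \<le> 1" "l * xbar = x" using assms unfolding l_def by auto
  have "(\<integral>\<^sup>+t\<in>{0<..x}. ennreal (h_dens \<beta> m t) \<partial>lborel)
      \<le> ennreal (l * (h_dens \<beta> m x / h_dens \<beta> m xbar)) * (\<integral>\<^sup>+t\<in>{0<..xbar}. ennreal (h_dens \<beta> m t) \<partial>lborel)"
  proof (rule nn_set_integral_dilation_le)
    fix s assume "l * s \<in> {0<..x}"
    then have s: "0 < s" "s \<le> xbar"
      using l mult_le_cancel_left_pos[of l s xbar] by (auto simp: zero_less_mult_iff)
    have "0 \<le> (1/xbar - 1/s) * (1 - 1/l)"
      using s l by (intro mult_nonpos_nonpos) (auto simp: field_simps)
    then have "h_dens \<beta> m (l * s) * h_dens \<beta> m xbar \<le> h_dens \<beta> m x * h_dens \<beta> m s"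
      using h_dens_mult_le[of xbar s l m \<beta>] assms s l by simp
    then show "s \<in> {0<..xbar} \<and> h_dens \<beta> m (l * s) \<le> h_dens \<beta> m x / h_dens \<beta> m xbar * h_dens \<beta> m s"
      using s h_dens_pos[of \<beta> m xbar] assms by (simp add: field_simps)
  qed (use l assms in \<open>auto simp: h_dens_nonneg\<close>)
  then show ?thesis
    by (simp add: l_def)
qed

lemma smooth_on_has_real_derivative:
  "smooth_on S f \<Longrightarrow> x \<in> S \<Longrightarrow> (f has_real_derivative deriv f x) (at x)"
  unfolding smooth_on_def by (metis DERIV_deriv_iff_real_differentiable funpow_0)

lemma smooth_on_continuous_on_deriv:
  assumes "smooth_on S f"
  shows "continuous_on S (deriv f)"
proof (intro continuous_at_imp_continuous_on ballI)
  fix x assume "x \<in> S"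
  then have "deriv f differentiable (at x)"
    using assms unfolding smooth_on_def by (metis funpow_0 funpow_Suc_right o_apply)
  then show "isCont (deriv f) x"
    by (rule differentiable_imp_continuous_within)
qed

lemma nn_set_integral_h_dens_halves:
  assumes "0 < xbar" and median: "(LINT x:{0<..xbar}|lborel. h_dens \<beta> m x) = 1/2"
  shows "(\<integral>\<^sup>+t\<in>{0<..xbar}. ennreal (h_dens \<beta> m t) \<partial>lborel) = ennreal (1/2)"
    and "(\<integral>\<^sup>+t\<in>{xbar..}. ennreal (h_dens \<beta> m t) \<partial>lborel) = ennreal (1/2)"
proof -
  have C: "0 < C_const \<beta> m"
    using median by (rule C_const_pos_of_median)
  show lower: "(\<integral>\<^sup>+t\<in>{0<..xbar}. ennreal (h_dens \<beta> m t) \<partial>lborel) = ennreal (1/2)"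
    using nn_set_integral_h_dens[OF C, of "{0<..xbar}"] median by simp
  have "ennreal (1/2) + ennreal (1/2) = 1"
    using ennreal_plus[of "1/2" "1/2"] by simp
  also have "1 = (\<integral>\<^sup>+t\<in>{0<..}. ennreal (h_dens \<beta> m t) \<partial>lborel)"
    using nn_set_integral_h_dens[OF C, of "{0<..}"] set_integral_h_dens[OF C] by simp
  also have "\<dots> = ennreal (1/2) + (\<integral>\<^sup>+t\<in>{xbar..}. ennreal (h_dens \<beta> m t) \<partial>lborel)"
    using nn_set_integral_split_at[OF \<open>0 < xbar\<close>, of "\<lambda>t. ennreal (h_dens \<beta> m t)"] lower by simp
  finally show "(\<integral>\<^sup>+t\<in>{xbar..}. ennreal (h_dens \<beta> m t) \<partial>lborel) = ennreal (1/2)"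
    by (simp add: ennreal_add_left_cancel)
qed

lemma h_dens_hazard_bounds:
  fixes \<beta> m xbar :: real
  defines "c \<equiv> 1 / (2 * (xbar * h_dens \<beta> m xbar))"
  assumes "0 \<le> m" "0 < xbar" and median: "(LINT x:{0<..xbar}|lborel. h_dens \<beta> m x) = 1/2"
  shows "\<And>x. 0 < x \<Longrightarrow> x \<le> xbar \<Longrightarrow>
           (\<integral>\<^sup>+t\<in>{0<..x}. ennreal (h_dens \<beta> m t) \<partial>lborel) \<le> ennreal (c * x * h_dens \<beta> m x)"
    and "\<And>x. xbar \<le> x \<Longrightarrow>
           (\<integral>\<^sup>+t\<in>{x..}. ennreal (h_dens \<beta> m t) \<partial>lborel) \<le> ennreal (c * x * h_dens \<beta> m x)"
proof -
  have C: "0 < C_const \<beta> m"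
    using median by (rule C_const_pos_of_median)
  have half: "ennreal (x * h_dens \<beta> m x / (xbar * h_dens \<beta> m xbar)) * ennreal (1/2) = ennreal (c * x * h_dens \<beta> m x)"
    if "0 < x" for x
    using that \<open>0 < xbar\<close> by (subst ennreal_mult'[symmetric]) (auto simp: c_def h_dens_nonneg)
  show "(\<integral>\<^sup>+t\<in>{0<..x}. ennreal (h_dens \<beta> m t) \<partial>lborel) \<le> ennreal (c * x * h_dens \<beta> m x)"
    if "0 < x" "x \<le> xbar" for x
    using nn_set_integral_h_dens_head_le[OF C \<open>0 \<le> m\<close> that] half[OF \<open>0 < x\<close>]
      nn_set_integral_h_dens_halves(1)[OF \<open>0 < xbar\<close> median] by simp
  show "(\<integral>\<^sup>+t\<in>{x..}. ennreal (h_dens \<beta> m t) \<partial>lborel) \<le> ennreal (c * x * h_dens \<beta> m x)"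
    if "xbar \<le> x" for x
    using nn_set_integral_h_dens_tail_le[OF C \<open>0 \<le> m\<close> \<open>0 < xbar\<close> that] half[of x] that \<open>0 < xbar\<close>
      nn_set_integral_h_dens_halves(2)[OF \<open>0 < xbar\<close> median] by simp
qed

theorem theorem4p3:
  fixes \<beta> m xbar p :: real and \<phi> :: "real \<Rightarrow> real"
  assumes "\<beta> > 1/2" and "m > 0"
    and "xbar > 0" and "(LINT x:{0<..xbar}|lborel. h_dens \<beta> m x) = 1/2"
    and "1 \<le> p"
    and "smooth_on {0<..} \<phi>"
    and "(\<integral>\<^sup>+x\<in>{0<..}. ennreal (\<bar>\<phi> x\<bar> powr p * h_dens \<beta> m x) \<partial>lborel) < \<infinity>"
  shows "(\<integral>\<^sup>+x\<in>{0<..}. ennreal (\<bar>\<phi> x - (LINT y:{0<..}|lborel. \<phi> y * h_dens \<beta> m y)\<bar> powr p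
              * h_dens \<beta> m x) \<partial>lborel)
         \<le> ennreal ((p * (1 / (xbar * h_dens \<beta> m xbar))) powr p)
           * (\<integral>\<^sup>+x\<in>{0<..}. ennreal (x powr p * \<bar>deriv \<phi> x\<bar> powr p * h_dens \<beta> m x) \<partial>lborel)"
proof -
  define c where "c = 1 / (2 * (xbar * h_dens \<beta> m xbar))"
  have C: "0 < C_const \<beta> m"
    using assms(4) by (rule C_const_pos_of_median)
  have "0 \<le> c"
    using \<open>xbar > 0\<close> by (simp add: c_def h_dens_nonneg)
  moreover have "\<And>x. 0 < x \<Longrightarrow> (\<phi> has_real_derivative deriv \<phi> x) (at x)"
    using smooth_on_has_real_derivative[OF assms(6)] by simp
  moreover have "(\<integral>\<^sup>+x\<in>{0<..}. ennreal (h_dens \<beta> m x) \<partial>lborel) = 1"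
    using nn_set_integral_h_dens[OF C] set_integral_h_dens[OF C] by simp
  ultimately have "(\<integral>\<^sup>+x\<in>{0<..}. ennreal (\<bar>\<phi> x - (LINT y:{0<..}|lborel. \<phi> y * h_dens \<beta> m y)\<bar> powr p
              * h_dens \<beta> m x) \<partial>lborel)
         \<le> ennreal ((2 * p * c) powr p)
           * (\<integral>\<^sup>+x\<in>{0<..}. ennreal (x powr p * \<bar>deriv \<phi> x\<bar> powr p * h_dens \<beta> m x) \<partial>lborel)"
    using \<open>xbar > 0\<close> \<open>1 \<le> p\<close> smooth_on_continuous_on_deriv[OF assms(6)]
      h_dens_hazard_bounds[OF less_imp_le[OF \<open>m > 0\<close>] \<open>xbar > 0\<close> assms(4)]
    by (intro Poincare_inequality_from_hazard_bounds continuous_on_h_dens h_dens_nonneg) (auto simp: c_def)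
  moreover have "2 * p * c = p * (1 / (xbar * h_dens \<beta> m xbar))"
    by (simp add: c_def)
  ultimately show ?thesis
    by simp
qed

end
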